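(* Let $k$ be an odd integer with $k\ge5$, and let $n>k$ be a positive integer with $n\equiv (k+1)/2\pmod k$. Then $\mathrm{msum}(n,k)>1$.
   Context: Let $n,k$ be positive integers with $n>k$ and let $S_n$ be the set of permutations $\pi=(\pi_1,\dots,\pi_n)$ of $1,\dots,n$. Indices are taken cyclically: $\pi_{n+i}=\pi_i$. The $k$-consecutive sums of $\pi$ are $s_i=\sum_{j=0}^{k-1}\pi_{i+j}$ for $i=1,\dots,n$. Define $\mathrm{msum}(\pi,k)=\max\{s_i: 1\le i\le n\}-\frac{k(n+1)}{2}$ and $\mathrm{msum}(n,k)=\min\{\mathrm{msum}(\pi,k):\pi\in S_n\}$. *)

theory Defs
  imports Main Complex_Main
begin

text \<open>Permutations of 1..n represented as bijections from positions {0..<n}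
  onto values {1..n}; position i (0-based) corresponds to pi_(i+1).
  Cyclic indexing is via mod n.\<close>

definition perms_of :: "nat \<Rightarrow> (nat \<Rightarrow> nat) set" where
  "perms_of n = {p. bij_betw p {0..<n} {1..n} \<and> (\<forall>i. i \<ge> n \<longrightarrow> p i = 0)}"

definition ksum :: "nat \<Rightarrow> (nat \<Rightarrow> nat) \<Rightarrow> nat \<Rightarrow> nat \<Rightarrow> nat" where
  "ksum n p k i = (\<Sum>j<k. p ((i + j) mod n))"

definition msum_perm :: "nat \<Rightarrow> (nat \<Rightarrow> nat) \<Rightarrow> nat \<Rightarrow> real" where
  "msum_perm n p k = real (Max {ksum n p k i | i. i < n}) - real k * (real n + 1) / 2"

definition msum :: "nat \<Rightarrow> nat \<Rightarrow> real" where
  "msum n k = Min {msum_perm n p k | p. p \<in> perms_of n}"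

end

theory Submission
  imports Defs
begin

text \<open>Write \<open>n = q k + r\<close> with \<open>k = 2 r - 1\<close>, and let \<open>M\<close> be the largest \<open>k\<close>-window sum of
  a permutation, read as an \<open>n\<close>-periodic sequence. Cutting the full period, starting anywhere,
  into an \<open>r\<close>-window followed by \<open>q\<close> consecutive \<open>k\<close>-windows shows that every \<open>r\<close>-window has
  sum at least \<open>n (n + 1) / 2 - q M\<close>. The \<open>r\<close>-windows ending and starting at the position of
  the entry \<open>1\<close> overlap exactly there and together cover a \<open>k\<close>-window, so their sums add up to
  at most \<open>M + 1\<close>. Hence \<open>n (n + 1) \<le> (2 q + 1) M + 1\<close>, and since \<open>(2 q + 1) k + 1 = 2 n\<close>
  this forces \<open>2 M > k (n + 1) + 2\<close> as soon as \<open>n \<ge> 4 q + 4\<close>, which holds for \<open>k \<ge> 5\<close>.\<close>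

definition window_sum :: "(nat \<Rightarrow> nat) \<Rightarrow> nat \<Rightarrow> nat \<Rightarrow> nat" where
  "window_sum g x l = (\<Sum>j<l. g (x + j))"

lemma window_sum_add:
  "window_sum g x (l + m) = window_sum g x l + window_sum g (x + l) m"
  unfolding window_sum_def by (induction m) (simp_all add: add.assoc)

lemma window_sum_Suc:
  "window_sum g x (Suc l) = g x + window_sum g (Suc x) l"
  unfolding window_sum_def by (subst sum.lessThan_Suc_shift) simp

lemma window_sum_mult_le:
  assumes "\<And>y. window_sum g y k \<le> M"
  shows "window_sum g x (q * k) \<le> q * M"
proof (induction q arbitrary: x)
  case 0
  then show ?case by (simp add: window_sum_def)
next
  case (Suc q)
  have "window_sum g x (Suc q * k) = window_sum g x k + window_sum g (x + k) (q * k)"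
    by (simp add: window_sum_add)
  also have "\<dots> \<le> M + q * M"
    using assms Suc.IH by (intro add_mono)
  finally show ?case by simp
qed

lemma window_sum_shift_period:
  assumes "\<And>y. g (y + n) = g y"
  shows "window_sum g (x + n) l = window_sum g x l"
  unfolding window_sum_def by (metis (no_types) add.commute add.left_commute assms)

lemma window_sum_period:
  assumes "\<And>y. g (y + n) = g y"
  shows "window_sum g x n = window_sum g 0 n"
proof (induction x)
  case 0
  then show ?case by simp
next
  case (Suc x)
  have "g x + window_sum g (Suc x) n = window_sum g x n + g x"
    using window_sum_add[of g x n 1] window_sum_Suc[of g x n] assms
    by (simp add: window_sum_def)
  with Suc.IH show ?case by simp
qed

lemma two_windows_bound:
  assumes period: "\<And>y. g (y + n) = g y"
    and window_le: "\<And>y. window_sum g y k \<le> M"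
    and n: "n = q * k + r" and k: "k + 1 = 2 * r"
  shows "2 * window_sum g 0 n \<le> (2 * q + 1) * M + g a"
proof -
  have cover: "window_sum g 0 n \<le> window_sum g c r + q * M" for c
  proof -
    have "window_sum g 0 n = window_sum g c (r + q * k)"
      using window_sum_period[where g = g, OF period, of c] n by (simp add: add.commute)
    also have "\<dots> = window_sum g c r + window_sum g (c + r) (q * k)"
      by (rule window_sum_add)
    also have "\<dots> \<le> window_sum g c r + q * M"
      using window_sum_mult_le[OF window_le] by simp
    finally show ?thesis .
  qed
  obtain s where r: "r = Suc s" and ks: "k = r + s"
    using k by (cases r) auto
  \<comment> \<open>the \<open>r\<close>-window ending at \<open>a\<close>, taken one period later so that \<open>r \<le> a\<close> is not needed\<close>
  define b where "b = a + n + 1 - r"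
  have b: "b + r = Suc a + n"
    unfolding b_def using n r by simp
  have "window_sum g b k = window_sum g b r + window_sum g (Suc a + n) s"
    unfolding ks window_sum_add b ..
  moreover have "window_sum g a r = g a + window_sum g (Suc a) s"
    unfolding r window_sum_Suc ..
  ultimately have "window_sum g b r + window_sum g a r = window_sum g b k + g a"
    using window_sum_shift_period[where g = g, OF period, of "Suc a" s] by simp
  also have "\<dots> \<le> M + g a"
    using window_le by simp
  finally have "window_sum g b r + window_sum g a r \<le> M + g a" .
  with cover[of a] cover[of b] show ?thesis
    by (simp add: algebra_simps)
qed

lemma max_window_sum_gt:
  fixes n q k M :: nat
  assumes "n * (n + 1) \<le> (2 * q + 1) * M + 1" and "(2 * q + 1) * k + 1 = 2 * n"
    and "4 * q + 4 \<le> n"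
  shows "k * (n + 1) + 2 < 2 * M"
proof (rule ccontr)
  assume "\<not> ?thesis"
  then have "(2 * q + 1) * (2 * M) + (n + 1) \<le> (2 * q + 1) * (k * (n + 1) + 2) + (n + 1)"
    by (intro add_right_mono mult_le_mono2) simp
  also have "\<dots> = ((2 * q + 1) * k + 1) * (n + 1) + 2 * (2 * q + 1)"
    by (simp add: algebra_simps)
  also have "\<dots> = 2 * (n * (n + 1)) + 2 * (2 * q + 1)"
    unfolding assms(2) by simp
  also have "\<dots> \<le> (2 * q + 1) * (2 * M) + 2 + 2 * (2 * q + 1)"
    using assms(1) by simp
  finally show False
    using assms(3) by simp
qed

lemma perms_of_finite: "finite (perms_of n)"
proof (rule finite_subset)
  show "perms_of n \<subseteq> {f. \<forall>x. (x \<in> {0..<n} \<longrightarrow> f x \<in> {1..n}) \<and> (x \<notin> {0..<n} \<longrightarrow> f x = 0)}"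
    unfolding perms_of_def bij_betw_def by auto
  show "finite \<dots>"
    by (rule finite_set_of_finite_funs) simp_all
qed

lemma perms_of_nonempty: "perms_of n \<noteq> {}"
proof -
  define p where "p i = (if i < n then Suc i else 0)" for i
  have "bij_betw p {0..<n} {1..n}"
    by (rule bij_betw_byWitness[where f' = "\<lambda>y. y - 1"]) (auto simp: p_def)
  then have "p \<in> perms_of n"
    unfolding perms_of_def by (simp add: p_def)
  then show ?thesis by blast
qed

lemma perms_of_sum:
  assumes "p \<in> perms_of n"
  shows "2 * (\<Sum>i<n. p i) = n * (n + 1)"
proof -
  have "bij_betw p {0..<n} {1..n}"
    using assms unfolding perms_of_def by simp
  then have "(\<Sum>i<n. p i) = (\<Sum>i = 1..n. i)"
    using sum.reindex_bij_betw[of p "{0..<n}" "{1..n}" "\<lambda>i. i"] by (simp add: atLeast0LessThan)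
  then show ?thesis
    using double_gauss_sum_from_Suc_0[of n, where 'a = nat] by simp
qed

lemma perms_of_obtain_one:
  assumes "p \<in> perms_of n" and "0 < n"
  obtains a where "a < n" and "p a = 1"
proof -
  have "1 \<in> p ` {0..<n}"
    using assms unfolding perms_of_def bij_betw_def by simp
  then show ?thesis
    using that by auto
qed

lemma ksum_le_Max:
  assumes "0 < n"
  shows "ksum n p k x \<le> Max {ksum n p k i | i. i < n}"
proof -
  have "ksum n p k x = ksum n p k (x mod n)"
    unfolding ksum_def by (simp add: mod_add_left_eq)
  moreover have "{ksum n p k i | i. i < n} = (\<lambda>i. ksum n p k i) ` {..<n}"
    by auto
  ultimately show ?thesis
    using assms by simp
qed

lemma msum_perm_gt_1:
  assumes p: "p \<in> perms_of n" and n: "n = q * k + r" and k: "k + 1 = 2 * r"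
    and "1 \<le> q" and "5 \<le> k"
  shows "1 < msum_perm n p k"
proof -
  define g where "g x = p (x mod n)" for x
  define M where "M = Max {ksum n p k i | i. i < n}"
  have "0 < n" "3 \<le> r"
    using assms by auto
  have period: "g (y + n) = g y" for y
    unfolding g_def by simp
  have window_le: "window_sum g y k \<le> M" for y
    using ksum_le_Max[OF \<open>0 < n\<close>, of p k y] unfolding M_def ksum_def window_sum_def g_def .
  have total: "2 * window_sum g 0 n = n * (n + 1)"
    using perms_of_sum[OF p] unfolding window_sum_def g_def by simp
  obtain a where "g a = 1"
    using perms_of_obtain_one[OF p \<open>0 < n\<close>] unfolding g_def by (metis mod_less)
  then have "n * (n + 1) \<le> (2 * q + 1) * M + 1"
    using two_windows_bound[where g = g, OF period window_le n k, of a] total by simp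
  moreover have "(2 * q + 1) * k + 1 = 2 * n"
    using n k by (simp add: algebra_simps)
  moreover have "4 * q + 4 \<le> n"
    using n \<open>1 \<le> q\<close> \<open>3 \<le> r\<close> mult_le_mono2[OF \<open>5 \<le> k\<close>, of q] by linarith
  ultimately have "real (k * (n + 1) + 2) < real (2 * M)"
    by (simp only: of_nat_less_iff max_window_sum_gt)
  then show ?thesis
    unfolding msum_perm_def M_def by (simp add: field_simps)
qed

theorem theorem1p3:
  fixes n k :: nat
  assumes "odd k" and "k \<ge> 5" and "n > k"
    and "n mod k = ((k + 1) div 2) mod k"
  shows "msum n k > 1"
proof -
  define r where "r = (k + 1) div 2"
  define q where "q = n div k"
  have k: "k + 1 = 2 * r" and "r < k"
    using assms(1,2) unfolding r_def by (auto elim: oddE)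
  then have n: "n = q * k + r"
    using assms(4) div_mult_mod_eq[of n k] unfolding q_def r_def by simp
  have "1 \<le> q"
    using assms(2,3) unfolding q_def by (simp add: Suc_leI div_greater_zero_iff)
  have "finite ((\<lambda>p. msum_perm n p k) ` perms_of n)"
    using perms_of_finite by simp
  moreover have "(\<lambda>p. msum_perm n p k) ` perms_of n \<noteq> {}"
    using perms_of_nonempty by simp
  moreover have "{msum_perm n p k | p. p \<in> perms_of n} = (\<lambda>p. msum_perm n p k) ` perms_of n"
    by auto
  ultimately show ?thesis
    unfolding msum_def using msum_perm_gt_1[OF _ n k \<open>1 \<le> q\<close> assms(2)] by (simp add: Min_gr_iff)
qed

end
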